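(* Let $\Omega\subset\mathbb{R}^n$ be a bounded domain, $T>0$, $\mathscr D:=\Omega\times(0,T)$, $\mathscr U\subset\mathscr D$ open, and let $e:\mathscr D\times\mathbb{R}\to\mathbb{R}$, $(x,t,r)\mapsto e(x,t)[r]$, be affine in $r$ with $e(x,t)[\pm1]>0$ for $(x,t)\in\mathscr U$. If $e$ is continuous and bounded on $\mathscr U\times[-1,1]$, then the map $(x,t)\mapsto\pi(K_{(x,t)})$ is continuous and bounded on $\mathscr U$ with respect to the Hausdorff metric.
   Context: $n\ge2$; $\mathcal S_0^{n\times n}$ the trace-free symmetric matrices; $Z:=\mathbb{R}\times\mathbb{R}^n\times\mathbb{R}^n\times\mathcal S_0^{n\times n}\times\mathbb{R}$ with elements $z=(\rho,v,m,\sigma,p)$; $\pi(z):=(\rho,v,m,\sigma)$; $K_{(x,t)}:=\{z\in Z:\rho\in\{\pm1\},m=\rho v,v\otimes v-\sigma=e(x,t)[\rho]\mathrm{Id}\}$. *)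

theory Defs
  imports "HOL-Analysis.Analysis"
begin

text \<open>Hausdorff distance between (nonempty, bounded) subsets of a metric space.\<close>
definition hausdorff_dist :: "'a::metric_space set \<Rightarrow> 'a set \<Rightarrow> real" where
  "hausdorff_dist A B = max (SUP a\<in>A. infdist a B) (SUP b\<in>B. infdist b A)"

definition symTF :: "(real^'n^'n) set" where
  "symTF = {\<sigma>. transpose \<sigma> = \<sigma> \<and> trace \<sigma> = 0}"

definition tensor :: "real^'n \<Rightarrow> real^'n \<Rightarrow> real^'n^'n" where
  "tensor v w = (\<chi> i j. v $ i * w $ j)"

definition Zspace :: "(real \<times> (real^'n) \<times> (real^'n) \<times> (real^'n^'n) \<times> real) set" where
  "Zspace = {(\<rho>, v, m, \<sigma>, p). \<sigma> \<in> symTF}"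

definition piZ :: "real \<times> (real^'n) \<times> (real^'n) \<times> (real^'n^'n) \<times> real \<Rightarrow> real \<times> (real^'n) \<times> (real^'n) \<times> (real^'n^'n)" where
  "piZ z = (case z of (\<rho>, v, m, \<sigma>, p) \<Rightarrow> (\<rho>, v, m, \<sigma>))"

definition Kset :: "((real^'n) \<times> real \<Rightarrow> real \<Rightarrow> real) \<Rightarrow> (real^'n) \<times> real
      \<Rightarrow> (real \<times> (real^'n) \<times> (real^'n) \<times> (real^'n^'n) \<times> real) set" where
  "Kset e y = {z \<in> Zspace. case z of (\<rho>, v, m, \<sigma>, p) \<Rightarrow>
       \<rho> \<in> {1, -1} \<and> m = \<rho> *\<^sub>R v \<and> tensor v v - \<sigma> = e y \<rho> *\<^sub>R mat 1}"

end

(* For e[\<rho>] \<ge> 0 the trace-free condition on \<sigma> = v \<otimes> v - e[\<rho>] Id forces |v|\<^sup>2 = n e[\<rho>], so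
   \<pi>(K) is the image of {1, -1} \<times> S\<^sup>n\<^sup>-\<^sup>1 under
   (\<rho>, u) \<mapsto> (\<rho>, \<surd>(n e[\<rho>]) u, \<rho> \<surd>(n e[\<rho>]) u, e[\<rho>] (n u \<otimes> u - Id)).
   Pairing the points of two such sets with the same parameter (\<rho>, u) bounds their Hausdorff
   distance by the sum over \<rho> = \<plusminus>1 of 2 |\<surd>(n e[\<rho>]) - \<surd>(n e'[\<rho>])| + C |e[\<rho>] - e'[\<rho>]|, which is
   continuous in (x, t), vanishes on the diagonal and is bounded when e is. *)

theory Submission imports Defs begin

lemma tensor_nth: "tensor v w $ i = v $ i *\<^sub>R w"
  by (simp add: tensor_def vec_eq_iff)

lemma norm_tensor: "norm (tensor v w) = norm v * norm (w :: real^'n)"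
proof -
  have "norm (tensor v w) = L2_set (\<lambda>i. \<bar>v $ i\<bar> * norm w) UNIV"
    unfolding norm_vec_def[of "tensor v w"] tensor_nth by simp
  also have "\<dots> = norm v * norm w"
    unfolding norm_vec_def[of v] by (simp add: L2_set_left_distrib)
  finally show ?thesis .
qed

lemma tensor_scaleR: "tensor (k *\<^sub>R v) (k *\<^sub>R v) = k\<^sup>2 *\<^sub>R tensor v v"
  by (simp add: tensor_def vec_eq_iff power2_eq_square)

lemma continuous_on_tensor [continuous_intros]:
  "continuous_on S f \<Longrightarrow> continuous_on S (\<lambda>x. tensor (f x) (f x :: real^'n))"
  unfolding tensor_def by (intro continuous_intros)

lemma tensor_diff_scalar_in_symTF_iff:
  "tensor v v - c *\<^sub>R mat 1 \<in> symTF \<longleftrightarrow> v \<bullet> v = real CARD('n) * c"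
    for v :: "real^'n"
proof -
  have "transpose (tensor v v - c *\<^sub>R mat 1) = tensor v v - c *\<^sub>R mat 1"
    by (simp add: transpose_def tensor_def mat_def vec_eq_iff mult.commute)
  moreover have "trace (tensor v v - c *\<^sub>R mat 1) = v \<bullet> v - real CARD('n) * c"
    by (simp add: trace_def tensor_def mat_def inner_vec_def sum_subtractf)
  ultimately show ?thesis
    unfolding symTF_def by simp
qed

lemma exists_unit_vector_scaleR_norm: "\<exists>u::real^'n. norm u = 1 \<and> v = norm v *\<^sub>R u"
proof (cases "v = 0")
  case True
  then show ?thesis
    using vector_choose_size[of 1] by (metis norm_zero scale_zero_left zero_le_one)
next
  case False
  then show ?thesis
    by (intro exI[of _ "sgn v"]) (simp add: norm_sgn sgn_div_norm)
qed

type_synonym 'n piZ_point = "real \<times> (real^'n) \<times> (real^'n) \<times> (real^'n^'n)"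

text \<open>The fibre of \<open>\<pi>(K)\<close> over \<open>\<rho>\<close> with \<open>e[\<rho>] = c\<close>, parametrised by the unit sphere via
  \<open>v = \<surd>(n c) u\<close> and \<open>\<sigma> = v \<otimes> v - c Id = c (n u \<otimes> u - Id)\<close>.\<close>
definition K_param :: "real \<Rightarrow> real \<Rightarrow> real^'n \<Rightarrow> ('n::finite) piZ_point" where
  "K_param \<rho> c u = (\<rho>, sqrt (real CARD('n) * c) *\<^sub>R u, (\<rho> * sqrt (real CARD('n) * c)) *\<^sub>R u,
     c *\<^sub>R (real CARD('n) *\<^sub>R tensor u u - mat 1))"

definition K_image :: "(real \<Rightarrow> real) \<Rightarrow> ('n::finite) piZ_point set" where
  "K_image c = (\<lambda>(\<rho>, u). K_param \<rho> (c \<rho>) u) ` ({1, -1} \<times> sphere 0 1)"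

lemma K_param_eq_tensor:
  fixes u :: "real^'n"
  assumes "c \<ge> 0" "v = sqrt (real CARD('n) * c) *\<^sub>R u"
  shows "K_param \<rho> c u = (\<rho>, v, \<rho> *\<^sub>R v, tensor v v - c *\<^sub>R mat 1)"
  using assms by (simp add: K_param_def tensor_scaleR algebra_simps)

lemma piZ_Kset_eq_K_image:
  fixes e :: "(real^'n) \<times> real \<Rightarrow> real \<Rightarrow> real"
  assumes "e y 1 \<ge> 0" "e y (-1) \<ge> 0"
  shows "piZ ` Kset e y = K_image (e y)"
proof (intro equalityI subsetI)
  fix w assume "w \<in> piZ ` Kset e y"
  then obtain \<rho> v m \<sigma> p where "(\<rho>, v, m, \<sigma>, p) \<in> Kset e y" and w: "w = (\<rho>, v, m, \<sigma>)"
    by (force simp: piZ_def)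
  then have \<rho>: "\<rho> \<in> {1, -1}" and m: "m = \<rho> *\<^sub>R v" and \<sigma>: "\<sigma> = tensor v v - e y \<rho> *\<^sub>R mat 1"
    and "\<sigma> \<in> symTF"
    by (auto simp: Kset_def Zspace_def algebra_simps)
  then have "v \<bullet> v = real CARD('n) * e y \<rho>"
    by (simp add: tensor_diff_scalar_in_symTF_iff)
  then have "norm v = sqrt (real CARD('n) * e y \<rho>)"
    by (simp add: norm_eq_sqrt_inner)
  moreover obtain u where u: "norm u = 1" "v = norm v *\<^sub>R u"
    using exists_unit_vector_scaleR_norm by blast
  moreover have "e y \<rho> \<ge> 0"
    using \<rho> assms by auto
  ultimately have "w = K_param \<rho> (e y \<rho>) u"
    by (simp add: K_param_eq_tensor w m \<sigma>)
  then show "w \<in> K_image (e y)"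
    using \<rho> u by (force simp: K_image_def)
next
  fix w :: "'n piZ_point" assume "w \<in> K_image (e y)"
  then obtain \<rho> u where \<rho>: "\<rho> \<in> {1, -1}" and u: "norm (u::real^'n) = 1"
    and w: "w = K_param \<rho> (e y \<rho>) u"
    unfolding K_image_def by force
  define v where "v = sqrt (real CARD('n) * e y \<rho>) *\<^sub>R u"
  have c: "e y \<rho> \<ge> 0"
    using \<rho> assms by auto
  have "v \<bullet> v = real CARD('n) * e y \<rho>"
    using c u by (simp add: v_def power2_norm_eq_inner[symmetric])
  then have "(\<rho>, v, \<rho> *\<^sub>R v, tensor v v - e y \<rho> *\<^sub>R mat 1, 0) \<in> Kset e y"
    using \<rho> by (auto simp: Kset_def Zspace_def tensor_diff_scalar_in_symTF_iff)
  moreover have "w = piZ (\<rho>, v, \<rho> *\<^sub>R v, tensor v v - e y \<rho> *\<^sub>R mat 1, 0)"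
    by (simp add: w piZ_def K_param_eq_tensor[OF c v_def])
  ultimately show "w \<in> piZ ` Kset e y"
    by blast
qed

lemma compact_K_image: "compact (K_image c :: ('n::finite) piZ_point set)"
proof -
  have "K_image c = (\<Union>\<rho>\<in>{1, -1}. K_param \<rho> (c \<rho>) ` sphere (0::real^'n) 1)"
    unfolding K_image_def by (auto intro: rev_image_eqI)
  moreover have "compact (K_param \<rho> (c \<rho>) ` sphere (0::real^'n) 1)" for \<rho>
    unfolding K_param_def by (intro compact_continuous_image compact_sphere continuous_intros)
  ultimately show ?thesis
    by (simp add: compact_Un)
qed

lemma K_image_nonempty: "K_image c \<noteq> ({} :: ('n::finite) piZ_point set)"
proof -
  obtain u :: "real^'n" where "norm u = 1"
    using vector_choose_size[of 1] by auto
  then show ?thesis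
    by (auto simp: K_image_def)
qed

lemma hausdorff_dist_image_le:
  assumes "S \<noteq> {}" and "\<And>s. s \<in> S \<Longrightarrow> dist (f s) (g s) \<le> d"
  shows "hausdorff_dist (f ` S) (g ` S) \<le> d"
proof -
  have "infdist (f s) (g ` S) \<le> d" if "s \<in> S" for s
    using infdist_le[of "g s" "g ` S" "f s"] assms(2) that by force
  moreover have "infdist (g s) (f ` S) \<le> d" if "s \<in> S" for s
    using infdist_le[of "f s" "f ` S" "g s"] assms(2)[OF that] that by (force simp: dist_commute)
  ultimately show ?thesis
    using assms(1) unfolding hausdorff_dist_def by (auto intro!: cSUP_least)
qed

lemma dist_K_param_le:
  fixes u :: "real^'n"
  assumes "\<bar>\<rho>\<bar> = 1" and "norm u = 1"
  shows "dist (K_param \<rho> c u) (K_param \<rho> c' u)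
    \<le> 2 * \<bar>sqrt (real CARD('n) * c) - sqrt (real CARD('n) * c')\<bar>
      + \<bar>c - c'\<bar> * (real CARD('n) + norm (mat 1 :: real^'n^'n))"
proof -
  define k where "k = sqrt (real CARD('n) * c) - sqrt (real CARD('n) * c')"
  define H :: "real^'n^'n" where "H = real CARD('n) *\<^sub>R tensor u u - mat 1"
  have "norm H \<le> real CARD('n) + norm (mat 1 :: real^'n^'n)"
    using norm_triangle_ineq4[of "real CARD('n) *\<^sub>R tensor u u" "mat 1"]
    by (simp add: H_def norm_tensor assms(2))
  then have H: "norm ((c - c') *\<^sub>R H) \<le> \<bar>c - c'\<bar> * (real CARD('n) + norm (mat 1 :: real^'n^'n))"
    by (simp add: mult_left_mono)
  have "dist (K_param \<rho> c u) (K_param \<rho> c' u) = norm ((0::real), k *\<^sub>R u, (\<rho> * k) *\<^sub>R u, (c - c') *\<^sub>R H)"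
    by (simp add: dist_norm K_param_def k_def H_def algebra_simps)
  also have "\<dots> \<le> norm k + (norm ((\<rho> * k) *\<^sub>R u) + norm ((c - c') *\<^sub>R H))"
    using norm_Pair_le[of 0 "(k *\<^sub>R u, (\<rho> * k) *\<^sub>R u, (c - c') *\<^sub>R H)"]
      norm_Pair_le[of "k *\<^sub>R u" "((\<rho> * k) *\<^sub>R u, (c - c') *\<^sub>R H)"]
      norm_Pair_le[of "(\<rho> * k) *\<^sub>R u" "(c - c') *\<^sub>R H"]
    by (simp add: assms(2))
  also have "\<dots> \<le> 2 * \<bar>k\<bar> + \<bar>c - c'\<bar> * (real CARD('n) + norm (mat 1 :: real^'n^'n))"
    using H by (simp add: assms abs_mult)
  finally show ?thesis
    by (simp add: k_def)
qed

lemma hausdorff_dist_K_image_le: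
  "hausdorff_dist (K_image c) (K_image c' :: ('n::finite) piZ_point set)
    \<le> (\<Sum>\<rho>\<in>{1, -1}. 2 * \<bar>sqrt (real CARD('n) * c \<rho>) - sqrt (real CARD('n) * c' \<rho>)\<bar>
      + \<bar>c \<rho> - c' \<rho>\<bar> * (real CARD('n) + norm (mat 1 :: real^'n^'n)))"
  unfolding K_image_def
proof (rule hausdorff_dist_image_le)
  fix s :: "real \<times> (real^'n)" assume "s \<in> {1, -1} \<times> sphere 0 1"
  then obtain \<rho> u where s: "s = (\<rho>, u)" and \<rho>: "\<rho> \<in> {1, -1}" and u: "norm u = 1"
    by auto
  have "dist (K_param \<rho> (c \<rho>) u) (K_param \<rho> (c' \<rho>) u)
    \<le> 2 * \<bar>sqrt (real CARD('n) * c \<rho>) - sqrt (real CARD('n) * c' \<rho>)\<bar>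
      + \<bar>c \<rho> - c' \<rho>\<bar> * (real CARD('n) + norm (mat 1 :: real^'n^'n))"
    using \<rho> u by (intro dist_K_param_le) auto
  also have "\<dots> \<le> (\<Sum>\<rho>\<in>{1, -1}. 2 * \<bar>sqrt (real CARD('n) * c \<rho>) - sqrt (real CARD('n) * c' \<rho>)\<bar>
      + \<bar>c \<rho> - c' \<rho>\<bar> * (real CARD('n) + norm (mat 1 :: real^'n^'n)))"
    using \<rho> by (intro member_le_sum) auto
  finally show "dist ((\<lambda>(\<rho>, u). K_param \<rho> (c \<rho>) u) s) ((\<lambda>(\<rho>, u). K_param \<rho> (c' \<rho>) u) s) \<le> \<dots>"
    by (simp add: s)
qed (auto intro: K_image_nonempty[unfolded K_image_def])

lemma K_image_hausdorff_continuous: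
  fixes c :: "'a::metric_space \<Rightarrow> real \<Rightarrow> real"
  assumes cont: "\<And>\<rho>. \<rho> \<in> {1, -1} \<Longrightarrow> continuous_on U (\<lambda>y. c y \<rho>)"
    and "y \<in> U" and "\<epsilon> > 0"
  shows "\<exists>\<delta>>0. \<forall>y'\<in>U. dist y' y < \<delta> \<longrightarrow>
    hausdorff_dist (K_image (c y')) (K_image (c y) :: ('n::finite) piZ_point set) < \<epsilon>"
proof -
  define D where "D y' = (\<Sum>\<rho>\<in>{1, -1}.
    2 * \<bar>sqrt (real CARD('n) * c y' \<rho>) - sqrt (real CARD('n) * c y \<rho>)\<bar>
      + \<bar>c y' \<rho> - c y \<rho>\<bar> * (real CARD('n) + norm (mat 1 :: real^'n^'n)))" for y'
  have "continuous_on U D"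
    unfolding D_def by (intro continuous_intros cont)
  moreover have "D y = 0"
    by (simp add: D_def)
  ultimately obtain \<delta> where "\<delta> > 0" and "\<forall>y'\<in>U. dist y' y < \<delta> \<longrightarrow> \<bar>D y'\<bar> < \<epsilon>"
    using assms(2,3) unfolding continuous_on_iff by (metis dist_real_def diff_zero)
  moreover have "hausdorff_dist (K_image (c y')) (K_image (c y) :: 'n piZ_point set) \<le> D y'" for y'
    unfolding D_def by (rule hausdorff_dist_K_image_le)
  ultimately show ?thesis
    by (meson abs_ge_self order_le_less_trans)
qed

lemma hausdorff_dist_K_image_bounded:
  assumes "\<And>\<rho>. \<rho> \<in> {1, -1} \<Longrightarrow> \<bar>c \<rho>\<bar> \<le> B" and "\<And>\<rho>. \<rho> \<in> {1, -1} \<Longrightarrow> \<bar>c' \<rho>\<bar> \<le> B"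
  shows "hausdorff_dist (K_image c) (K_image c' :: ('n::finite) piZ_point set)
    \<le> 8 * sqrt (real CARD('n) * B) + 4 * B * (real CARD('n) + norm (mat 1 :: real^'n^'n))"
proof -
  define M where "M = real CARD('n) + norm (mat 1 :: real^'n^'n)"
  have sqrt_le: "\<bar>sqrt (real CARD('n) * x)\<bar> \<le> sqrt (real CARD('n) * B)" if "\<bar>x\<bar> \<le> B" for x
    using that by (simp add: real_sqrt_abs'[symmetric] abs_mult mult_left_mono)
  have "2 * \<bar>sqrt (real CARD('n) * c \<rho>) - sqrt (real CARD('n) * c' \<rho>)\<bar> + \<bar>c \<rho> - c' \<rho>\<bar> * M
    \<le> 4 * sqrt (real CARD('n) * B) + 2 * B * M"
    if "\<rho> \<in> {1, -1}" for \<rho>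
  proof -
    have "\<bar>sqrt (real CARD('n) * c \<rho>) - sqrt (real CARD('n) * c' \<rho>)\<bar> \<le> 2 * sqrt (real CARD('n) * B)"
      using sqrt_le[OF assms(1)[OF that]] sqrt_le[OF assms(2)[OF that]] by linarith
    moreover have "\<bar>c \<rho> - c' \<rho>\<bar> * M \<le> (2 * B) * M"
      using assms[OF that] by (intro mult_right_mono) (auto simp: M_def)
    ultimately show ?thesis
      by (smt (verit))
  qed
  from this[of 1] this[of "-1"] show ?thesis
    using hausdorff_dist_K_image_le[where 'n='n, of c c'] by (simp add: M_def)
qed


theorem lemma3p12:
  fixes \<Omega> :: "(real^'n) set" and T :: real and U :: "((real^'n) \<times> real) set"
    and e :: "(real^'n) \<times> real \<Rightarrow> real \<Rightarrow> real"
  assumes n2: "CARD('n) \<ge> 2"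
    and dom: "open \<Omega>" "connected \<Omega>" "\<Omega> \<noteq> {}" "bounded \<Omega>"
    and T: "T > 0"
    and U: "open U" "U \<subseteq> \<Omega> \<times> {0<..<T}"
    and affine: "\<forall>y\<in>\<Omega> \<times> {0<..<T}. \<exists>a b. \<forall>r. e y r = a + b * r"
    and pos: "\<forall>y\<in>U. e y 1 > 0 \<and> e y (-1) > 0"
    and cont: "continuous_on (U \<times> {-1..1}) (\<lambda>(y, r). e y r)"
    and bdd: "bounded ((\<lambda>(y, r). e y r) ` (U \<times> {-1..1}))"
  shows "(\<forall>y\<in>U. compact (piZ ` Kset e y) \<and> piZ ` Kset e y \<noteq> {})
    \<and> (\<forall>y\<in>U. \<forall>\<epsilon>>0. \<exists>\<delta>>0. \<forall>y'\<in>U. dist y' y < \<delta> \<longrightarrow>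
           hausdorff_dist (piZ ` Kset e y') (piZ ` Kset e y) < \<epsilon>)
    \<and> (\<exists>C. \<forall>y\<in>U. \<forall>y'\<in>U. hausdorff_dist (piZ ` Kset e y) (piZ ` Kset e y') \<le> C)"
proof -
  have K_eq: "piZ ` Kset e y = K_image (e y)" if "y \<in> U" for y
    using pos that by (intro piZ_Kset_eq_K_image) auto
  have e_cont: "continuous_on U (\<lambda>y. e y \<rho>)" if "\<rho> \<in> {1, -1}" for \<rho>
  proof -
    have "continuous_on U (\<lambda>y. (\<lambda>(y, r). e y r) (y, \<rho>))"
      using that by (intro continuous_on_compose2[OF cont]) (auto intro: continuous_intros)
    then show ?thesis
      by simp
  qed
  obtain B where "\<forall>z\<in>(\<lambda>(y, r). e y r) ` (U \<times> {-1..1}). norm z \<le> B"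
    using bdd unfolding bounded_iff by blast
  then have B: "\<bar>e y \<rho>\<bar> \<le> B" if "y \<in> U" and "\<rho> \<in> {1, -1}" for y \<rho>
    using that by force
  have "compact (piZ ` Kset e y) \<and> piZ ` Kset e y \<noteq> {}" if "y \<in> U" for y
    using K_eq[OF that] compact_K_image[where 'n='n] K_image_nonempty[where 'n='n] by simp
  moreover have "\<exists>\<delta>>0. \<forall>y'\<in>U. dist y' y < \<delta> \<longrightarrow>
      hausdorff_dist (piZ ` Kset e y') (piZ ` Kset e y) < \<epsilon>"
    if "y \<in> U" and "\<epsilon> > 0" for y \<epsilon>
    using K_image_hausdorff_continuous[OF e_cont that] K_eq that(1) by simp
  moreover have "hausdorff_dist (piZ ` Kset e y) (piZ ` Kset e y')
      \<le> 8 * sqrt (real CARD('n) * B) + 4 * B * (real CARD('n) + norm (mat 1 :: real^'n^'n))"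
    if "y \<in> U" and "y' \<in> U" for y y'
    using hausdorff_dist_K_image_bounded[OF B B] K_eq that by simp
  ultimately show ?thesis
    by blast
qed

end
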